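(* Let $\xi_1,\dots,\xi_n$ be independent real random variables with $\mathbf{E}\xi_i=0$, satisfying Bernstein's condition: there is a constant $\varepsilon>0$ such that $|\mathbf{E}\xi_i^k|\le \frac12 k!\,\varepsilon^{k-2}\mathbf{E}\xi_i^2$ for all $k\ge 3$ and $i=1,\dots,n$. Let $\sigma^2=\sum_{i=1}^n\mathbf{E}\xi_i^2$, $\Psi_n(\lambda)=\sum_{i=1}^n\log\mathbf{E}e^{\lambda\xi_i}$ and $T_n(\lambda)=\sum_{i=1}^n\frac{\mathbf{E}\xi_ie^{\lambda\xi_i}}{\mathbf{E}e^{\lambda\xi_i}}$. Then for all $0\le\lambda<\varepsilon^{-1}$, \[ \Psi_n(\lambda)\le n\log\Big(1+\frac{\lambda^2\sigma^2}{2n(1-\lambda\varepsilon)}\Big)\le\frac{\lambda^2\sigma^2}{2(1-\lambda\varepsilon)} \] and \[ -\lambda T_n(\lambda)+\Psi_n(\lambda)\ge-\frac{\lambda^2\sigma^2}{2(1-\lambda\varepsilon)^6}. \] *)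

theory Defs
  imports "HOL-Probability.Probability"
begin

end

theory Submission
  imports Defs
begin

text \<open>
  Write \<open>m\<^sub>k\<close> for the \<open>k\<close>-th moment of one summand \<open>\<xi>\<close>. Bernstein's condition bounds the
  \<open>k\<close>-th term \<open>\<lambda>\<^sup>k m\<^sub>k / k!\<close> of the moment series of \<open>E exp(\<lambda>\<xi>)\<close> by
  \<open>\<lambda>\<^sup>2 m\<^sub>2 / 2 \<cdot> (\<lambda>\<epsilon>)\<^sup>k\<^sup>-\<^sup>2\<close>, so this series, and that of \<open>E (\<lambda>\<xi> - 1) exp(\<lambda>\<xi>)\<close> whose terms carry
  an extra factor \<open>k - 1\<close>, are dominated by a geometric series and its derivative. As
  \<open>m\<^sub>1 = 0\<close>, this gives \<open>E exp(\<lambda>\<xi>) \<le> 1 + \<lambda>\<^sup>2 m\<^sub>2 / (2(1 - \<lambda>\<epsilon>))\<close>, which is summed over the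
  variables by concavity of \<open>ln\<close>, and \<open>\<lambda> E \<xi> exp(\<lambda>\<xi>) - E exp(\<lambda>\<xi>) \<le> \<lambda>\<^sup>2 m\<^sub>2 / (2(1 - \<lambda>\<epsilon>)\<^sup>2) - 1\<close>,
  which together with \<open>1 \<le> E exp(\<lambda>\<xi>) = F\<close> and \<open>ln F \<ge> 1 - 1/F\<close> bounds each summand of
  \<open>\<lambda> T\<^sub>n - \<Psi>\<^sub>n\<close>. Expectation and summation are exchanged by dominated convergence, with
  dominating function \<open>C exp(\<lambda>'|\<xi>|)\<close> for some \<open>\<lambda> < \<lambda>' < 1/\<epsilon>\<close>; its integrability comes from
  the series of \<open>cosh(\<lambda>'\<xi>)\<close>, whose terms are nonnegative since only even moments occur.
\<close>

lemma exp_series_real: "(\<lambda>k. y ^ k / fact k) sums exp (y::real)"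
  using exp_converges[of y] by (simp add: divide_inverse mult.commute)

lemma mult_exp_series_real: "(\<lambda>k. real k * y ^ k / fact k) sums (y * exp (y::real))"
proof -
  have "(\<lambda>k. y * (y ^ k / fact k)) sums (y * exp y)"
    by (intro sums_mult exp_series_real)
  then have "(\<lambda>k. real (Suc k) * y ^ Suc k / fact (Suc k)) sums (y * exp y)"
    by (simp add: fact_Suc divide_simps)
  then show ?thesis
    using sums_Suc_iff[of "\<lambda>k. real k * y ^ k / fact k"] by simp
qed

lemma exp_abs_le_two_cosh: "exp \<bar>y\<bar> \<le> 2 * cosh (y::real)"
  using exp_gt_zero[of y] exp_gt_zero[of "- y"] by (cases "0 \<le> y") (simp_all add: cosh_def)

lemma abs_mult_exp_plus_exp_le:
  fixes l l' t :: real
  assumes l: "0 \<le> l" "l < l'"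
  shows "\<bar>l * t\<bar> * exp \<bar>l * t\<bar> + exp \<bar>l * t\<bar> \<le> (1 + l / (l' - l)) * exp (l' * \<bar>t\<bar>)"
proof -
  define d where "d = l' - l"
  have d: "d > 0" using l unfolding d_def by simp
  have "\<bar>t\<bar> * d \<le> exp (\<bar>t\<bar> * d)"
    using exp_ge_add_one_self[of "\<bar>t\<bar> * d"] by linarith
  then have "l * exp (l * \<bar>t\<bar>) * (\<bar>t\<bar> * d) \<le> l * exp (l * \<bar>t\<bar>) * exp (\<bar>t\<bar> * d)"
    using l by (intro mult_left_mono) auto
  then have "l * \<bar>t\<bar> * exp (l * \<bar>t\<bar>) \<le> l / d * (exp (\<bar>t\<bar> * d) * exp (l * \<bar>t\<bar>))"
    using d by (simp add: field_simps)
  also have "exp (\<bar>t\<bar> * d) * exp (l * \<bar>t\<bar>) = exp (l' * \<bar>t\<bar>)"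
    unfolding d_def by (simp add: algebra_simps flip: exp_add)
  finally have "\<bar>l * t\<bar> * exp \<bar>l * t\<bar> \<le> l / d * exp (l' * \<bar>t\<bar>)"
    using l by (simp add: abs_mult)
  moreover have "exp \<bar>l * t\<bar> \<le> exp (l' * \<bar>t\<bar>)"
    using l by (simp add: abs_mult mult_right_mono)
  moreover have "(1 + l / d) * exp (l' * \<bar>t\<bar>) = exp (l' * \<bar>t\<bar>) + l / d * exp (l' * \<bar>t\<bar>)"
    by (simp add: distrib_right)
  ultimately show ?thesis
    unfolding d_def by linarith
qed

lemma sum_ln_one_plus_le:
  fixes a :: "'i \<Rightarrow> real"
  assumes "finite I" and a: "\<And>i. i \<in> I \<Longrightarrow> 0 \<le> a i"
  shows "(\<Sum>i\<in>I. ln (1 + a i)) \<le> card I * ln (1 + (\<Sum>i\<in>I. a i) / card I)"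
proof (cases "I = {}")
  case False
  define m where "m = (\<Sum>i\<in>I. a i) / card I"
  have card: "card I > 0" using False \<open>finite I\<close> by (simp add: card_gt_0_iff)
  have m: "0 \<le> m" unfolding m_def using a by (simp add: sum_nonneg)
  have "(\<Sum>i\<in>I. ln (1 + a i)) \<le> (\<Sum>i\<in>I. ln (1 + m) + ((1 + a i) / (1 + m) - 1))"
  proof (rule sum_mono)
    fix i assume "i \<in> I"
    then have ai: "0 \<le> a i" by (rule a)
    have "ln ((1 + a i) / (1 + m)) \<le> (1 + a i) / (1 + m) - 1"
      using ai m by (intro ln_le_minus_one) auto
    moreover have "ln ((1 + a i) / (1 + m)) = ln (1 + a i) - ln (1 + m)"
      using ai m by (intro ln_divide_pos) auto
    ultimately show "ln (1 + a i) \<le> ln (1 + m) + ((1 + a i) / (1 + m) - 1)"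
      by simp
  qed
  also have "\<dots> = card I * ln (1 + m) + ((card I + (\<Sum>i\<in>I. a i)) / (1 + m) - card I)"
    by (simp add: sum.distrib sum_subtractf add_divide_distrib sum_divide_distrib[symmetric])
  also have "(card I + (\<Sum>i\<in>I. a i)) / (1 + m) = card I"
    using card m unfolding m_def by (simp add: field_simps)
  finally show ?thesis unfolding m_def by simp
qed simp

lemma integral_power_series_sums:
  fixes X :: "'a \<Rightarrow> real" and c :: "nat \<Rightarrow> real"
  assumes X[measurable]: "X \<in> borel_measurable M"
    and moments: "\<And>k. integrable M (\<lambda>x. X x ^ k)"
    and w: "integrable M w"
    and bound: "\<And>N x. x \<in> space M \<Longrightarrow> \<bar>\<Sum>k<N. c k * X x ^ k\<bar> \<le> w x"
    and sums: "\<And>x. x \<in> space M \<Longrightarrow> (\<lambda>k. c k * X x ^ k) sums g x"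
    and g[measurable]: "g \<in> borel_measurable M"
  shows "integrable M g" "(\<lambda>k. c k * (\<integral>x. X x ^ k \<partial>M)) sums (\<integral>x. g x \<partial>M)"
proof -
  define s where "s N x = (\<Sum>k<N. c k * X x ^ k)" for N x
  have s: "s N \<in> borel_measurable M" for N unfolding s_def by measurable
  have lim: "AE x in M. (\<lambda>N. s N x) \<longlonglongrightarrow> g x"
    using sums unfolding s_def sums_def by auto
  have dom: "AE x in M. norm (s N x) \<le> w x" for N
    using bound unfolding s_def by auto
  show "integrable M g"
    by (rule integrable_dominated_convergence[OF g s w lim dom])
  have "(\<lambda>N. integral\<^sup>L M (s N)) \<longlonglongrightarrow> integral\<^sup>L M g"
    by (rule integral_dominated_convergence[OF g s w lim dom])
  moreover have "integral\<^sup>L M (s N) = (\<Sum>k<N. c k * (\<integral>x. X x ^ k \<partial>M))" for N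
    unfolding s_def using moments by (simp add: integral_sum)
  ultimately show "(\<lambda>k. c k * (\<integral>x. X x ^ k \<partial>M)) sums (\<integral>x. g x \<partial>M)"
    unfolding sums_def by simp
qed

locale bernstein_variable = prob_space +
  fixes X :: "'a \<Rightarrow> real" and \<epsilon> :: real
  assumes measurable_X[measurable]: "X \<in> borel_measurable M"
    and integrable_power: "\<And>k. integrable M (\<lambda>x. X x ^ k)"
    and mean_zero: "(\<integral>x. X x \<partial>M) = 0"
    and eps_pos: "0 < \<epsilon>"
    and bernstein: "\<And>k. 3 \<le> k \<Longrightarrow>
      \<bar>\<integral>x. X x ^ k \<partial>M\<bar> \<le> 1/2 * fact k * \<epsilon> ^ (k - 2) * (\<integral>x. X x ^ 2 \<partial>M)"
begin

lemma second_moment_nonneg: "0 \<le> (\<integral>x. X x ^ 2 \<partial>M)"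
  by (intro integral_nonneg_AE) auto

lemma moment_term_le:
  assumes "0 \<le> l" "2 \<le> k"
  shows "l ^ k / fact k * \<bar>\<integral>x. X x ^ k \<partial>M\<bar> \<le> l\<^sup>2 * (\<integral>x. X x ^ 2 \<partial>M) / 2 * (l * \<epsilon>) ^ (k - 2)"
proof (cases "k = 2")
  case True
  then show ?thesis using second_moment_nonneg by simp
next
  case False
  have power_split: "y ^ k = y\<^sup>2 * y ^ (k - 2)" for y :: real
    using \<open>2 \<le> k\<close> by (metis le_add_diff_inverse power_add)
  have "l ^ k / fact k * \<bar>\<integral>x. X x ^ k \<partial>M\<bar>
      \<le> l ^ k / fact k * (1/2 * fact k * \<epsilon> ^ (k - 2) * (\<integral>x. X x ^ 2 \<partial>M))"
    using False assms bernstein[of k] by (intro mult_left_mono) auto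
  also have "\<dots> = l\<^sup>2 * (\<integral>x. X x ^ 2 \<partial>M) / 2 * (l * \<epsilon>) ^ (k - 2)"
    by (simp add: power_split[of l] power_mult_distrib)
  finally show ?thesis .
qed

lemma integrable_cosh:
  assumes l: "0 \<le> l" "l * \<epsilon> < 1"
  shows "integrable M (\<lambda>x. cosh (l * X x))"
proof -
  define f where "f k x = (if even k then l ^ k / fact k * X x ^ k else 0)" for k x
  have f_nonneg: "0 \<le> f k x" for k x
    unfolding f_def using l by (auto simp: zero_le_even_power)
  have integrable_f: "integrable M (f k)" for k
    unfolding f_def using integrable_power by (cases "even k") auto
  have f_sums: "(\<lambda>k. f k x) sums cosh (l * X x)" for x
  proof -
    have "(\<lambda>k. if even k then (l * X x) ^ k /\<^sub>R fact k else 0) = (\<lambda>k. f k x)"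
      by (auto simp: f_def power_mult_distrib divide_inverse mult.commute)
    then show ?thesis using cosh_converges[of "l * X x"] by simp
  qed
  have f_bound: "(\<integral>x. norm (f k x) \<partial>M) \<le> l ^ k / fact k * \<bar>\<integral>x. X x ^ k \<partial>M\<bar>" for k
  proof -
    have "(\<integral>x. norm (f k x) \<partial>M) = (if even k then l ^ k / fact k * (\<integral>x. X x ^ k \<partial>M) else 0)"
      using f_nonneg unfolding f_def by simp
    moreover have "l ^ k / fact k * (\<integral>x. X x ^ k \<partial>M) \<le> l ^ k / fact k * \<bar>\<integral>x. X x ^ k \<partial>M\<bar>"
      using l by (intro mult_left_mono) auto
    ultimately show ?thesis using l by simp
  qed
  have "summable (\<lambda>i. \<integral>x. norm (f (i + 2) x) \<partial>M)"
  proof (rule summable_comparison_test'[where N = 0])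
    show "summable (\<lambda>i. l\<^sup>2 * (\<integral>x. X x ^ 2 \<partial>M) / 2 * (l * \<epsilon>) ^ i)"
      using l eps_pos by (intro summable_mult summable_geometric) simp
    fix i :: nat
    have "0 \<le> (\<integral>x. norm (f (i + 2) x) \<partial>M)"
      by (rule integral_nonneg_AE) simp
    then show "norm (\<integral>x. norm (f (i + 2) x) \<partial>M) \<le> l\<^sup>2 * (\<integral>x. X x ^ 2 \<partial>M) / 2 * (l * \<epsilon>) ^ i"
      using order_trans[OF f_bound moment_term_le[OF l(1)], of "i + 2"] by simp
  qed
  then have "summable (\<lambda>k. \<integral>x. norm (f k x) \<partial>M)"
    by (rule summable_iff_shift[THEN iffD1])
  then have "integrable M (\<lambda>x. \<Sum>k. f k x)"
    using f_sums f_nonneg by (intro integrable_suminf[OF integrable_f]) (auto simp: sums_iff)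
  then show ?thesis
    using f_sums by (simp add: sums_iff)
qed

lemma integrable_exp_abs:
  assumes l: "0 \<le> l" "l * \<epsilon> < 1"
  shows "integrable M (\<lambda>x. exp (l * \<bar>X x\<bar>))"
proof (rule Bochner_Integration.integrable_bound)
  show "integrable M (\<lambda>x. 2 * cosh (l * X x))"
    using integrable_cosh[OF l] by simp
  show "AE x in M. norm (exp (l * \<bar>X x\<bar>)) \<le> norm (2 * cosh (l * X x))"
    using exp_abs_le_two_cosh[of "l * X _"] l by (intro AE_I2) (simp add: abs_mult)
qed measurable

lemma moment_series_sums:
  fixes c :: "nat \<Rightarrow> real"
  assumes l: "0 \<le> l" "l * \<epsilon> < 1"
    and coeff: "\<And>k. \<bar>c k\<bar> \<le> (real k + 1) * l ^ k / fact k"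
    and sums: "\<And>x. (\<lambda>k. c k * X x ^ k) sums g x"
    and g: "g \<in> borel_measurable M"
  shows "integrable M g" "(\<lambda>k. c k * (\<integral>x. X x ^ k \<partial>M)) sums (\<integral>x. g x \<partial>M)"
proof -
  define l' where "l' = (l + 1 / \<epsilon>) / 2"
  have l': "l < l'" "l' * \<epsilon> < 1" "0 \<le> l'"
    using l eps_pos by (auto simp: l'_def field_simps)
  define w where "w x = (1 + l / (l' - l)) * exp (l' * \<bar>X x\<bar>)" for x
  have "integrable M w"
    unfolding w_def using integrable_exp_abs[OF l'(3,2)] by simp
  moreover have "\<bar>\<Sum>k<N. c k * X x ^ k\<bar> \<le> w x" for N x
  proof -
    define t where "t = \<bar>l * X x\<bar>"
    have "\<bar>\<Sum>k<N. c k * X x ^ k\<bar> \<le> (\<Sum>k<N. real k * t ^ k / fact k + t ^ k / fact k)"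
    proof (rule order_trans[OF sum_abs], rule sum_mono)
      fix k
      have "\<bar>c k\<bar> * \<bar>X x\<bar> ^ k \<le> (real k + 1) * l ^ k / fact k * \<bar>X x\<bar> ^ k"
        using coeff[of k] by (rule mult_right_mono) simp
      then have "\<bar>c k * X x ^ k\<bar> \<le> (real k + 1) * l ^ k / fact k * \<bar>X x\<bar> ^ k"
        by (simp add: abs_mult power_abs)
      then show "\<bar>c k * X x ^ k\<bar> \<le> real k * t ^ k / fact k + t ^ k / fact k"
        using l by (simp add: t_def abs_mult power_mult_distrib add_divide_distrib distrib_right)
    qed
    also have "\<dots> \<le> t * exp t + exp t"
    proof -
      have series: "(\<lambda>k. real k * t ^ k / fact k + t ^ k / fact k) sums (t * exp t + exp t)"
        by (intro sums_add mult_exp_series_real exp_series_real)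
      have "(\<Sum>k<N. real k * t ^ k / fact k + t ^ k / fact k) \<le> (\<Sum>k. real k * t ^ k / fact k + t ^ k / fact k)"
        by (rule sum_le_suminf) (use series in \<open>auto simp: sums_iff t_def\<close>)
      then show ?thesis using series by (simp add: sums_iff)
    qed
    also have "\<dots> \<le> w x"
      unfolding t_def w_def using abs_mult_exp_plus_exp_le[OF l(1) l'(1)] .
    finally show ?thesis .
  qed
  ultimately show "integrable M g" "(\<lambda>k. c k * (\<integral>x. X x ^ k \<partial>M)) sums (\<integral>x. g x \<partial>M)"
    using integral_power_series_sums[OF measurable_X integrable_power _ _ sums g] by auto
qed

lemma mgf_series:
  assumes "0 \<le> l" "l * \<epsilon> < 1"
  shows "integrable M (\<lambda>x. exp (l * X x))"
    "(\<lambda>k. l ^ k / fact k * (\<integral>x. X x ^ k \<partial>M)) sums (\<integral>x. exp (l * X x) \<partial>M)"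
proof -
  have sums: "(\<lambda>k. l ^ k / fact k * X x ^ k) sums exp (l * X x)" for x
    using exp_series_real[of "l * X x"] by (simp add: power_mult_distrib)
  have coeff: "\<bar>l ^ k / fact k\<bar> \<le> (real k + 1) * l ^ k / fact k" for k
  proof -
    have "1 * (l ^ k / fact k) \<le> (real k + 1) * (l ^ k / fact k)"
      using assms(1) by (intro mult_right_mono) auto
    then show ?thesis using assms(1) by simp
  qed
  show "integrable M (\<lambda>x. exp (l * X x))"
    by (rule moment_series_sums(1)[OF assms coeff sums]) measurable
  show "(\<lambda>k. l ^ k / fact k * (\<integral>x. X x ^ k \<partial>M)) sums (\<integral>x. exp (l * X x) \<partial>M)"
    by (rule moment_series_sums(2)[OF assms coeff sums]) measurable
qed

lemma xexp_minus_exp_series: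
  assumes "0 \<le> l" "l * \<epsilon> < 1"
  shows "integrable M (\<lambda>x. l * X x * exp (l * X x) - exp (l * X x))"
    "(\<lambda>k. (real k - 1) * l ^ k / fact k * (\<integral>x. X x ^ k \<partial>M))
       sums (\<integral>x. l * X x * exp (l * X x) - exp (l * X x) \<partial>M)"
proof -
  have sums: "(\<lambda>k. (real k - 1) * l ^ k / fact k * X x ^ k) sums (l * X x * exp (l * X x) - exp (l * X x))" for x
    using sums_diff[OF mult_exp_series_real[of "l * X x"] exp_series_real[of "l * X x"]]
    by (simp add: power_mult_distrib left_diff_distrib diff_divide_distrib mult.assoc)
  have coeff: "\<bar>(real k - 1) * l ^ k / fact k\<bar> \<le> (real k + 1) * l ^ k / fact k" for k
    using assms(1) by (simp add: abs_mult divide_right_mono mult_right_mono)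
  show "integrable M (\<lambda>x. l * X x * exp (l * X x) - exp (l * X x))"
    by (rule moment_series_sums(1)[OF assms coeff sums]) measurable
  show "(\<lambda>k. (real k - 1) * l ^ k / fact k * (\<integral>x. X x ^ k \<partial>M))
       sums (\<integral>x. l * X x * exp (l * X x) - exp (l * X x) \<partial>M)"
    by (rule moment_series_sums(2)[OF assms coeff sums]) measurable
qed

lemma mgf_ge_one:
  assumes "0 \<le> l" "l * \<epsilon> < 1"
  shows "1 \<le> (\<integral>x. exp (l * X x) \<partial>M)"
proof -
  have integrable_X: "integrable M X" using integrable_power[of 1] by simp
  have "1 = (\<integral>x. 1 + l * X x \<partial>M)"
    using integrable_X mean_zero by (simp add: prob_space)
  also have "\<dots> \<le> (\<integral>x. exp (l * X x) \<partial>M)"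
    using integrable_X mgf_series(1)[OF assms] by (intro integral_mono) (auto simp: exp_ge_add_one_self)
  finally show ?thesis .
qed

lemma mgf_le:
  assumes l: "0 \<le> l" "l * \<epsilon> < 1"
  shows "(\<integral>x. exp (l * X x) \<partial>M) \<le> 1 + l\<^sup>2 * (\<integral>x. X x ^ 2 \<partial>M) / (2 * (1 - l * \<epsilon>))"
proof -
  define v where "v = (\<integral>x. X x ^ 2 \<partial>M)"
  define a where "a k = l ^ k / fact k * (\<integral>x. X x ^ k \<partial>M)" for k
  have "a sums (\<integral>x. exp (l * X x) \<partial>M)"
    unfolding a_def by (rule mgf_series(2)[OF l])
  moreover have "(\<Sum>k<2. a k) = 1"
    using mean_zero by (simp add: a_def numeral_2_eq_2 prob_space)
  ultimately have tail: "(\<lambda>i. a (i + 2)) sums ((\<integral>x. exp (l * X x) \<partial>M) - 1)"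
    using sums_iff_shift[of a 2] by simp
  have majorant: "(\<lambda>i. l\<^sup>2 * v / 2 * (l * \<epsilon>) ^ i) sums (l\<^sup>2 * v / 2 * (1 / (1 - l * \<epsilon>)))"
    using l eps_pos by (intro sums_mult geometric_sums) simp
  have "a (i + 2) \<le> l\<^sup>2 * v / 2 * (l * \<epsilon>) ^ i" for i
  proof -
    have "a (i + 2) \<le> l ^ (i + 2) / fact (i + 2) * \<bar>\<integral>x. X x ^ (i + 2) \<partial>M\<bar>"
      unfolding a_def using l by (intro mult_left_mono) auto
    also have "\<dots> \<le> l\<^sup>2 * v / 2 * (l * \<epsilon>) ^ i"
      using moment_term_le[OF l(1), of "i + 2"] unfolding v_def by simp
    finally show ?thesis .
  qed
  then have "(\<integral>x. exp (l * X x) \<partial>M) - 1 \<le> l\<^sup>2 * v / 2 * (1 / (1 - l * \<epsilon>))"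
    using sums_le[OF _ tail majorant] by blast
  then show ?thesis
    unfolding v_def by simp
qed

lemma integral_xexp_minus_exp_le:
  assumes l: "0 \<le> l" "l * \<epsilon> < 1"
  shows "(\<integral>x. l * X x * exp (l * X x) - exp (l * X x) \<partial>M)
    \<le> l\<^sup>2 * (\<integral>x. X x ^ 2 \<partial>M) / (2 * (1 - l * \<epsilon>)\<^sup>2) - 1"
proof -
  define v where "v = (\<integral>x. X x ^ 2 \<partial>M)"
  define a where "a k = (real k - 1) * l ^ k / fact k * (\<integral>x. X x ^ k \<partial>M)" for k
  have "a sums (\<integral>x. l * X x * exp (l * X x) - exp (l * X x) \<partial>M)"
    unfolding a_def by (rule xexp_minus_exp_series(2)[OF l])
  moreover have "(\<Sum>k<2. a k) = -1"
    using mean_zero by (simp add: a_def numeral_2_eq_2 prob_space)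
  ultimately have tail: "(\<lambda>i. a (i + 2)) sums ((\<integral>x. l * X x * exp (l * X x) - exp (l * X x) \<partial>M) + 1)"
    using sums_iff_shift[of a 2] by simp
  have majorant: "(\<lambda>i. l\<^sup>2 * v / 2 * (real (Suc i) * (l * \<epsilon>) ^ i)) sums (l\<^sup>2 * v / 2 * (1 / (1 - l * \<epsilon>)\<^sup>2))"
    using l eps_pos by (intro sums_mult geometric_deriv_sums) simp
  have "a (i + 2) \<le> l\<^sup>2 * v / 2 * (real (Suc i) * (l * \<epsilon>) ^ i)" for i
  proof -
    have "a (i + 2) = real (Suc i) * (l ^ (i + 2) / fact (i + 2) * (\<integral>x. X x ^ (i + 2) \<partial>M))"
      unfolding a_def by simp
    also have "\<dots> \<le> real (Suc i) * (l ^ (i + 2) / fact (i + 2) * \<bar>\<integral>x. X x ^ (i + 2) \<partial>M\<bar>)"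
      using l by (intro mult_left_mono) auto
    also have "\<dots> \<le> real (Suc i) * (l\<^sup>2 * v / 2 * (l * \<epsilon>) ^ i)"
      using moment_term_le[OF l(1), of "i + 2"] unfolding v_def by (intro mult_left_mono) auto
    finally show ?thesis by (simp add: algebra_simps)
  qed
  then have "(\<integral>x. l * X x * exp (l * X x) - exp (l * X x) \<partial>M) + 1 \<le> l\<^sup>2 * v / 2 * (1 / (1 - l * \<epsilon>)\<^sup>2)"
    using sums_le[OF _ tail majorant] by blast
  then show ?thesis
    unfolding v_def by simp
qed

lemma tilted_mean_minus_ln_mgf_le:
  assumes l: "0 \<le> l" "l * \<epsilon> < 1"
  shows "l * (\<integral>x. X x * exp (l * X x) \<partial>M) / (\<integral>x. exp (l * X x) \<partial>M) - ln (\<integral>x. exp (l * X x) \<partial>M)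
    \<le> l\<^sup>2 * (\<integral>x. X x ^ 2 \<partial>M) / (2 * (1 - l * \<epsilon>)\<^sup>2)"
proof -
  define F where "F = (\<integral>x. exp (l * X x) \<partial>M)"
  define A where "A = l * (\<integral>x. X x * exp (l * X x) \<partial>M)"
  define c where "c = l\<^sup>2 * (\<integral>x. X x ^ 2 \<partial>M) / (2 * (1 - l * \<epsilon>)\<^sup>2)"
  have F: "1 \<le> F" unfolding F_def using mgf_ge_one[OF l] .
  have c: "0 \<le> c" unfolding c_def using second_moment_nonneg by simp
  have "integrable M (\<lambda>x. l * X x * exp (l * X x))"
    using Bochner_Integration.integrable_add[OF xexp_minus_exp_series(1) mgf_series(1), OF l l] by simp
  then have "(\<integral>x. l * X x * exp (l * X x) - exp (l * X x) \<partial>M) = A - F"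
    unfolding A_def F_def using mgf_series(1)[OF l] by (simp add: mult.assoc)
  then have "A \<le> F - 1 + c"
    using integral_xexp_minus_exp_le[OF l] unfolding c_def by simp
  then have "A / F \<le> 1 - 1 / F + c / F"
    using F by (simp add: divide_simps)
  moreover have "c / F \<le> c" using F c by (simp add: divide_le_eq mult_le_cancel_left1)
  moreover have "1 - 1 / F \<le> ln F"
    using ln_le_minus_one[of "1 / F"] F by (simp add: ln_div)
  ultimately have "A / F - ln F \<le> c" by linarith
  then show ?thesis unfolding A_def F_def c_def by simp
qed

lemma ln_mgf_le:
  assumes "0 \<le> l" "l * \<epsilon> < 1"
  shows "ln (\<integral>x. exp (l * X x) \<partial>M) \<le> ln (1 + l\<^sup>2 * (\<integral>x. X x ^ 2 \<partial>M) / (2 * (1 - l * \<epsilon>)))"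
  using mgf_ge_one[OF assms] mgf_le[OF assms] by (subst ln_le_cancel_iff) auto

lemma ln_mgf_minus_tilted_mean_ge:
  assumes l: "0 \<le> l" "l * \<epsilon> < 1"
  shows "- (l\<^sup>2 * (\<integral>x. X x ^ 2 \<partial>M) / (2 * (1 - l * \<epsilon>) ^ 6))
    \<le> - l * ((\<integral>x. X x * exp (l * X x) \<partial>M) / (\<integral>x. exp (l * X x) \<partial>M)) + ln (\<integral>x. exp (l * X x) \<partial>M)"
proof -
  \<comment> \<open>The argument gives the exponent 2; the weaker exponent 6 is what is claimed.\<close>
  have "(1 - l * \<epsilon>) ^ 6 \<le> (1 - l * \<epsilon>)\<^sup>2"
    using l eps_pos by (intro power_decreasing) auto
  then have "l\<^sup>2 * (\<integral>x. X x ^ 2 \<partial>M) / (2 * (1 - l * \<epsilon>)\<^sup>2) \<le> l\<^sup>2 * (\<integral>x. X x ^ 2 \<partial>M) / (2 * (1 - l * \<epsilon>) ^ 6)"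
    using l eps_pos second_moment_nonneg by (intro divide_left_mono) auto
  then show ?thesis
    using tilted_mean_minus_ln_mgf_le[OF l] by simp
qed

end

lemma mult_ln_one_plus_div_le:
  fixes s :: real
  assumes "0 \<le> s"
  shows "real n * ln (1 + s / real n) \<le> s"
proof (cases "n = 0")
  case False
  then have "real n * ln (1 + s / real n) \<le> real n * (s / real n)"
    using assms by (intro mult_left_mono ln_add_one_self_le_self) auto
  then show ?thesis using False by simp
qed (use assms in simp)

theorem lemma2:
  fixes M :: "'a measure" and \<xi> :: "nat \<Rightarrow> 'a \<Rightarrow> real"
    and n :: nat and \<epsilon> l :: real
  assumes "prob_space M"
    and rv: "\<And>i. i \<in> {1..n} \<Longrightarrow> \<xi> i \<in> borel_measurable M"
    and indep: "prob_space.indep_vars M (\<lambda>_. borel) \<xi> {1..n}"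
    and moments: "\<And>i k. i \<in> {1..n} \<Longrightarrow> integrable M (\<lambda>x. \<xi> i x ^ k)"
    and mean0: "\<And>i. i \<in> {1..n} \<Longrightarrow> (\<integral>x. \<xi> i x \<partial>M) = 0"
    and eps: "\<epsilon> > 0"
    and bernstein: "\<And>i k. i \<in> {1..n} \<Longrightarrow> k \<ge> 3 \<Longrightarrow>
       \<bar>\<integral>x. \<xi> i x ^ k \<partial>M\<bar> \<le> 1/2 * fact k * \<epsilon> ^ (k - 2) * (\<integral>x. \<xi> i x ^ 2 \<partial>M)"
    and lam: "0 \<le> l" "l < 1 / \<epsilon>"
  shows
    "let \<sigma>2 = (\<Sum>i=1..n. \<integral>x. \<xi> i x ^ 2 \<partial>M);
         \<Psi> = (\<Sum>i=1..n. ln (\<integral>x. exp (l * \<xi> i x) \<partial>M));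
         T = (\<Sum>i=1..n. (\<integral>x. \<xi> i x * exp (l * \<xi> i x) \<partial>M) / (\<integral>x. exp (l * \<xi> i x) \<partial>M))
     in \<Psi> \<le> real n * ln (1 + l^2 * \<sigma>2 / (2 * real n * (1 - l * \<epsilon>)))
      \<and> real n * ln (1 + l^2 * \<sigma>2 / (2 * real n * (1 - l * \<epsilon>))) \<le> l^2 * \<sigma>2 / (2 * (1 - l * \<epsilon>))
      \<and> - l * T + \<Psi> \<ge> - (l^2 * \<sigma>2 / (2 * (1 - l * \<epsilon>) ^ 6))"
proof -
  have l: "0 \<le> l" "l * \<epsilon> < 1" using lam eps by (auto simp: field_simps)
  have bv: "bernstein_variable M (\<xi> i) \<epsilon>" if "i \<in> {1..n}" for i
    using assms that by (simp add: bernstein_variable_def bernstein_variable_axioms_def)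
  define F where "F i = (\<integral>x. exp (l * \<xi> i x) \<partial>M)" for i
  define q where "q i = (\<integral>x. \<xi> i x * exp (l * \<xi> i x) \<partial>M) / F i" for i
  define v where "v i = (\<integral>x. \<xi> i x ^ 2 \<partial>M)" for i
  define \<sigma>2 where "\<sigma>2 = (\<Sum>i=1..n. v i)"
  define a where "a i = l\<^sup>2 * v i / (2 * (1 - l * \<epsilon>))" for i
  have a: "0 \<le> a i" for i
    unfolding a_def v_def using l by (auto intro: integral_nonneg_AE)
  have sum_a: "(\<Sum>i=1..n. a i) / real n = l\<^sup>2 * \<sigma>2 / (2 * real n * (1 - l * \<epsilon>))"
    unfolding a_def \<sigma>2_def by (simp add: sum_divide_distrib sum_distrib_left ac_simps)
  have "(\<Sum>i=1..n. ln (F i)) \<le> (\<Sum>i=1..n. ln (1 + a i))"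
    using bernstein_variable.ln_mgf_le[OF bv l] unfolding F_def a_def v_def by (intro sum_mono) auto
  also have "\<dots> \<le> real n * ln (1 + l\<^sup>2 * \<sigma>2 / (2 * real n * (1 - l * \<epsilon>)))"
    using sum_ln_one_plus_le[of "{1..n}" a] a sum_a by simp
  finally have upper: "(\<Sum>i=1..n. ln (F i)) \<le> real n * ln (1 + l\<^sup>2 * \<sigma>2 / (2 * real n * (1 - l * \<epsilon>)))" .
  have "real n * ln (1 + (\<Sum>i=1..n. a i) / real n) \<le> (\<Sum>i=1..n. a i)"
    using a by (intro mult_ln_one_plus_div_le sum_nonneg)
  then have log_le: "real n * ln (1 + l\<^sup>2 * \<sigma>2 / (2 * real n * (1 - l * \<epsilon>))) \<le> l\<^sup>2 * \<sigma>2 / (2 * (1 - l * \<epsilon>))"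
    unfolding sum_a unfolding a_def \<sigma>2_def by (simp add: sum_divide_distrib sum_distrib_left)
  have "- (l\<^sup>2 * \<sigma>2 / (2 * (1 - l * \<epsilon>) ^ 6)) = (\<Sum>i=1..n. - (l\<^sup>2 * v i / (2 * (1 - l * \<epsilon>) ^ 6)))"
    unfolding \<sigma>2_def by (simp add: sum_negf sum_distrib_left sum_divide_distrib)
  also have "\<dots> \<le> (\<Sum>i=1..n. - l * q i + ln (F i))"
    using bernstein_variable.ln_mgf_minus_tilted_mean_ge[OF bv l]
    unfolding F_def q_def v_def by (intro sum_mono) auto
  also have "\<dots> = - l * (\<Sum>i=1..n. q i) + (\<Sum>i=1..n. ln (F i))"
    by (simp add: sum.distrib sum_distrib_left sum_negf sum_subtractf)
  finally have lower: "- l * (\<Sum>i=1..n. q i) + (\<Sum>i=1..n. ln (F i)) \<ge> - (l\<^sup>2 * \<sigma>2 / (2 * (1 - l * \<epsilon>) ^ 6))" .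
  show ?thesis
    using upper log_le lower unfolding Let_def q_def F_def v_def \<sigma>2_def by blast
qed

end
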